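(* Let $M$ be a $3$-connected simple matroid with a $3$-connected simple minor $N$. Suppose that $x$ and $p$ are elements of $M$ such that $\{x,p\}$ is vertically $N$-contractible in $M$ but $p$ is not vertically $N$-contractible in $M$. Then $r(M)\ge 4$ and there is an $(M,N)$-vertbarrier $(C^*,p)$ with $x\in C^*$.
   Context: An element $p$ (or a set $X$) is vertically $N$-contractible in $M$ if $\mathrm{si}(M/p)$ (resp. $\mathrm{si}(M/X)$), the simplification, is a $3$-connected matroid with an $N$-minor. An $(M,N)$-vertbarrier is a pair $(C^*,p)$ where $C^*$ is a cocircuit of $M$ of rank $3$, $p\in\mathrm{cl}_M(C^* )-C^*$, and $\mathrm{si}(M/\{x,p\})$ is $3$-connected with an $N$-minor for some $x\in C^*$. *)

theory Defs
  imports Main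
begin

record 'a matroid =
  carrier :: "'a set"
  indep :: "'a set \<Rightarrow> bool"

definition matroid :: "'a matroid \<Rightarrow> bool" where
  "matroid M \<longleftrightarrow> finite (carrier M) \<and> indep M {} \<and>
     (\<forall>X. indep M X \<longrightarrow> X \<subseteq> carrier M) \<and>
     (\<forall>X Y. indep M X \<and> Y \<subseteq> X \<longrightarrow> indep M Y) \<and>
     (\<forall>X Y. indep M X \<and> indep M Y \<and> card X < card Y \<longrightarrow>
        (\<exists>e \<in> Y - X. indep M (insert e X)))"

definition rk :: "'a matroid \<Rightarrow> 'a set \<Rightarrow> nat" where
  "rk M X = Max (card ` {I. I \<subseteq> X \<and> indep M I})"

definition cl :: "'a matroid \<Rightarrow> 'a set \<Rightarrow> 'a set" where
  "cl M X = {e \<in> carrier M. rk M (insert e X) = rk M X}"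

definition basis :: "'a matroid \<Rightarrow> 'a set \<Rightarrow> bool" where
  "basis M B \<longleftrightarrow> indep M B \<and> (\<forall>X. indep M X \<and> B \<subseteq> X \<longrightarrow> X = B)"

definition circuit :: "'a matroid \<Rightarrow> 'a set \<Rightarrow> bool" where
  "circuit M C \<longleftrightarrow> C \<subseteq> carrier M \<and> \<not> indep M C \<and> (\<forall>e \<in> C. indep M (C - {e}))"

definition dual :: "'a matroid \<Rightarrow> 'a matroid" where
  "dual M = \<lparr> carrier = carrier M,
     indep = (\<lambda>I. I \<subseteq> carrier M \<and> (\<exists>B. basis M B \<and> I \<inter> B = {})) \<rparr>"

definition cocircuit :: "'a matroid \<Rightarrow> 'a set \<Rightarrow> bool" where
  "cocircuit M C \<longleftrightarrow> circuit (dual M) C"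

definition loop :: "'a matroid \<Rightarrow> 'a \<Rightarrow> bool" where
  "loop M e \<longleftrightarrow> circuit M {e}"

definition parallel :: "'a matroid \<Rightarrow> 'a \<Rightarrow> 'a \<Rightarrow> bool" where
  "parallel M e f \<longleftrightarrow> e \<noteq> f \<and> circuit M {e, f}"

definition simple :: "'a matroid \<Rightarrow> bool" where
  "simple M \<longleftrightarrow> (\<forall>C. circuit M C \<longrightarrow> card C \<ge> 3)"

definition delete :: "'a matroid \<Rightarrow> 'a set \<Rightarrow> 'a matroid" where
  "delete M X = \<lparr> carrier = carrier M - X,
     indep = (\<lambda>I. indep M I \<and> I \<subseteq> carrier M - X) \<rparr>"

definition contract :: "'a matroid \<Rightarrow> 'a set \<Rightarrow> 'a matroid" where
  "contract M X = \<lparr> carrier = carrier M - X,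
     indep = (\<lambda>I. I \<subseteq> carrier M - X \<and> rk M (I \<union> X) = card I + rk M X) \<rparr>"

definition iso :: "'a matroid \<Rightarrow> 'b matroid \<Rightarrow> bool" where
  "iso M N \<longleftrightarrow> (\<exists>f. bij_betw f (carrier M) (carrier N) \<and>
      (\<forall>X \<subseteq> carrier M. indep M X \<longleftrightarrow> indep N (f ` X)))"

definition has_minor :: "'a matroid \<Rightarrow> 'b matroid \<Rightarrow> bool" where
  "has_minor M N \<longleftrightarrow> (\<exists>C D. C \<subseteq> carrier M \<and> D \<subseteq> carrier M \<and> C \<inter> D = {} \<and>
      iso (delete (contract M C) D) N)"

definition simp_deletion :: "'a matroid \<Rightarrow> 'a set \<Rightarrow> bool" where
  "simp_deletion M D \<longleftrightarrow> D \<subseteq> carrier M \<and> (\<forall>e \<in> carrier M. loop M e \<longrightarrow> e \<in> D) \<and>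
     (\<forall>e \<in> carrier M - D. \<forall>f \<in> carrier M - D. \<not> parallel M e f) \<and>
     (\<forall>e \<in> carrier M. \<not> loop M e \<longrightarrow> (\<exists>f \<in> carrier M - D. f = e \<or> parallel M e f))"

definition si :: "'a matroid \<Rightarrow> 'a matroid" where
  "si M = delete M (SOME D. simp_deletion M D)"

definition conn_fun :: "'a matroid \<Rightarrow> 'a set \<Rightarrow> int" where
  "conn_fun M X = int (rk M X) + int (rk M (carrier M - X)) - int (rk M (carrier M))"

definition k_separation :: "'a matroid \<Rightarrow> nat \<Rightarrow> 'a set \<Rightarrow> bool" where
  "k_separation M k X \<longleftrightarrow> X \<subseteq> carrier M \<and> card X \<ge> k \<and> card (carrier M - X) \<ge> k
      \<and> conn_fun M X < int k"

definition three_connected :: "'a matroid \<Rightarrow> bool" where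
  "three_connected M \<longleftrightarrow> (\<forall>k X. k < 3 \<longrightarrow> \<not> k_separation M k X)"

text \<open>Note: a 0-separation never exists since conn_fun is nonnegative; k ranges over 1,2 effectively.\<close>

definition vert_contractible :: "'a matroid \<Rightarrow> 'b matroid \<Rightarrow> 'a set \<Rightarrow> bool" where
  "vert_contractible M N X \<longleftrightarrow> three_connected (si (contract M X)) \<and> has_minor (si (contract M X)) N"

definition vertbarrier :: "'a matroid \<Rightarrow> 'b matroid \<Rightarrow> 'a set \<Rightarrow> 'a \<Rightarrow> bool" where
  "vertbarrier M N Cs p \<longleftrightarrow> cocircuit M Cs \<and> rk M Cs = 3 \<and> p \<in> cl M Cs - Cs \<and>
     (\<exists>x \<in> Cs. three_connected (si (contract M {x, p})) \<and> has_minor (si (contract M {x, p})) N)"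

end

theory Submission
  imports Defs
begin

text \<open>Let \<open>G\<close> and \<open>H\<close> be the ground sets of \<open>si(M/p)\<close> and \<open>si(M/{x,p})\<close>. Sending every
  element of \<open>M - p\<close> to its representative in \<open>G\<close> embeds \<open>H \<union> {x}\<close> into \<open>G\<close>; contracting
  the image of \<open>x\<close> shows that \<open>si(M/p)\<close> has an \<open>N\<close>-minor too, so it cannot be 3-connected
  and has a \<open>k\<close>-separation \<open>(A, B)\<close> with \<open>k \<le> 2\<close> and the representative of \<open>x\<close> in \<open>B\<close>.
  Lift \<open>(A, B)\<close> to \<open>M\<close> and compare it with the partition it induces on \<open>H\<close>, where
  \<open>si(M/{x,p})\<close> is 3-connected: the rank count forces \<open>cl(A \<union> p)\<close> to be a hyperplane
  avoiding \<open>x\<close>, whose complement \<open>C\<^sup>*\<close> is a cocircuit of rank 3 spanning \<open>p\<close>, and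
  \<open>r(M) \<ge> 4\<close>.\<close>

section \<open>Independence and rank\<close>

lemma matroid_finite_carrier: "matroid M \<Longrightarrow> finite (carrier M)"
  unfolding matroid_def by blast

lemma indep_subset_carrier: "matroid M \<Longrightarrow> indep M I \<Longrightarrow> I \<subseteq> carrier M"
  unfolding matroid_def by blast

lemma indep_finite: "matroid M \<Longrightarrow> indep M I \<Longrightarrow> finite I"
  using indep_subset_carrier matroid_finite_carrier finite_subset by blast

lemma indep_empty: "matroid M \<Longrightarrow> indep M {}"
  unfolding matroid_def by blast

lemma indep_subset: "matroid M \<Longrightarrow> indep M X \<Longrightarrow> Y \<subseteq> X \<Longrightarrow> indep M Y"
  unfolding matroid_def by blast

lemma indep_augment:
  "matroid M \<Longrightarrow> indep M X \<Longrightarrow> indep M Y \<Longrightarrow> card X < card Y \<Longrightarrow> \<exists>e\<in>Y - X. indep M (insert e X)"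
  unfolding matroid_def by blast

lemma finite_card_indep_subsets:
  assumes "matroid M" shows "finite (card ` {I. P I \<and> indep M I})"
proof -
  have "{I. P I \<and> indep M I} \<subseteq> Pow (carrier M)"
    using indep_subset_carrier[OF assms] by blast
  then show ?thesis
    using matroid_finite_carrier[OF assms] by (meson finite_Pow_iff finite_imageI finite_subset)
qed

lemma card_le_rk: "matroid M \<Longrightarrow> indep M I \<Longrightarrow> I \<subseteq> X \<Longrightarrow> card I \<le> rk M X"
  unfolding rk_def using finite_card_indep_subsets[of M "\<lambda>I. I \<subseteq> X"] by (intro Max_ge) auto

lemma rk_witness:
  assumes "matroid M" obtains I where "I \<subseteq> X" "indep M I" "card I = rk M X"
proof -
  have "card ` {I. I \<subseteq> X \<and> indep M I} \<noteq> {}" using indep_empty[OF assms] by blast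
  then have "rk M X \<in> card ` {I. I \<subseteq> X \<and> indep M I}"
    unfolding rk_def using finite_card_indep_subsets[OF assms, of "\<lambda>I. I \<subseteq> X"] Max_in by auto
  then show ?thesis using that by auto
qed

lemma rk_eq_card_if_maximal:
  assumes M: "matroid M" and J: "indep M J" "J \<subseteq> X"
    and max: "\<forall>e\<in>X - J. \<not> indep M (insert e J)"
  shows "card J = rk M X"
proof -
  obtain I where I: "I \<subseteq> X" "indep M I" "card I = rk M X" using rk_witness[OF M] .
  have "\<not> card J < card I"
    using indep_augment[OF M J(1) I(2)] max I(1) by blast
  then show ?thesis using card_le_rk[OF M J] I(3) by linarith
qed

lemma indep_extend_to_rk:
  assumes M: "matroid M" and J: "indep M J" "J \<subseteq> X"
  obtains K where "J \<subseteq> K" "K \<subseteq> X" "indep M K" "card K = rk M X"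
proof -
  let ?S = "{K. (K \<subseteq> X \<and> J \<subseteq> K) \<and> indep M K}"
  have fin: "finite (card ` ?S)" using finite_card_indep_subsets[OF M] .
  have "card ` ?S \<noteq> {}" using J by blast
  then have "Max (card ` ?S) \<in> card ` ?S" using Max_in[OF fin] by blast
  then obtain K where K: "K \<in> ?S" "card K = Max (card ` ?S)" by auto
  have "\<forall>e\<in>X - K. \<not> indep M (insert e K)"
  proof (intro ballI notI)
    fix e assume e: "e \<in> X - K" "indep M (insert e K)"
    then have "insert e K \<in> ?S" using K(1) by blast
    then have "card (insert e K) \<le> card K" unfolding K(2) using fin by (intro Max_ge) auto
    then show False using e indep_finite[OF M e(2)] by simp
  qed
  then have "card K = rk M X" using rk_eq_card_if_maximal[OF M] K(1) by simp
  then show ?thesis using that K(1) by blast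
qed

lemma rk_mono: assumes M: "matroid M" and "X \<subseteq> Y" shows "rk M X \<le> rk M Y"
proof -
  obtain I where I: "I \<subseteq> X" "indep M I" "card I = rk M X" using rk_witness[OF M] .
  have "I \<subseteq> Y" using I(1) \<open>X \<subseteq> Y\<close> by blast
  then show ?thesis using card_le_rk[OF M I(2)] I(3) by simp
qed

lemma rk_le_card: assumes M: "matroid M" and "finite X" shows "rk M X \<le> card X"
proof -
  obtain I where I: "I \<subseteq> X" "indep M I" "card I = rk M X" using rk_witness[OF M] .
  show ?thesis using card_mono[OF \<open>finite X\<close> I(1)] I(3) by simp
qed

lemma rk_indep: "matroid M \<Longrightarrow> indep M I \<Longrightarrow> rk M I = card I"
  using card_le_rk[of M I I] rk_le_card[of M I] indep_finite[of M I] by (simp add: le_antisym)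

lemma rk_submod:
  assumes M: "matroid M"
  shows "rk M (X \<union> Y) + rk M (X \<inter> Y) \<le> rk M X + rk M Y"
proof -
  obtain J where J: "J \<subseteq> X \<inter> Y" "indep M J" "card J = rk M (X \<inter> Y)"
    using rk_witness[OF M] .
  have "J \<subseteq> X \<union> Y" using J(1) by blast
  then obtain K where K: "J \<subseteq> K" "K \<subseteq> X \<union> Y" "indep M K" "card K = rk M (X \<union> Y)"
    using indep_extend_to_rk[OF M J(2)] by blast
  have fK: "finite K" using indep_finite[OF M K(3)] .
  have "card (K \<inter> X) \<le> rk M X" "card (K \<inter> Y) \<le> rk M Y"
    by (rule card_le_rk[OF M indep_subset[OF M K(3)]]; blast)+
  moreover have "card J \<le> card (K \<inter> X \<inter> Y)" using J K fK by (intro card_mono) auto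
  moreover have "card (K \<inter> X) + card (K \<inter> Y) = card K + card (K \<inter> X \<inter> Y)"
  proof -
    have "(K \<inter> X) \<union> (K \<inter> Y) = K" "(K \<inter> X) \<inter> (K \<inter> Y) = K \<inter> X \<inter> Y" using K(2) by blast+
    then show ?thesis using card_Un_Int[of "K \<inter> X" "K \<inter> Y"] fK by simp
  qed
  ultimately show ?thesis using J(3) K(4) by linarith
qed

lemma rk_insert_le: assumes M: "matroid M" shows "rk M (insert e X) \<le> Suc (rk M X)"
proof -
  obtain I where I: "I \<subseteq> insert e X" "indep M I" "card I = rk M (insert e X)"
    using rk_witness[OF M] .
  have "card (I - {e}) \<le> rk M X"
    using card_le_rk[OF M indep_subset[OF M I(2)]] I(1) by blast
  moreover have "card I \<le> Suc (card (I - {e}))"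
    using indep_finite[OF M I(2)] by (cases "e \<in> I") (simp_all add: card_Suc_Diff1)
  ultimately show ?thesis using I(3) by linarith
qed

lemma rk_insert_ge: "matroid M \<Longrightarrow> rk M X \<le> rk M (insert e X)"
  using rk_mono[of M X "insert e X"] by blast

lemma rk_Un_le_card_add:
  assumes M: "matroid M" and "finite X" shows "rk M (X \<union> Y) \<le> card X + rk M Y"
  using \<open>finite X\<close>
proof (induction X rule: finite_induct)
  case (insert e X)
  then show ?case using rk_insert_le[OF M, of e "X \<union> Y"] by simp
qed simp

lemma rk_Un_spanned:
  assumes M: "matroid M" and W: "\<forall>w\<in>W. rk M (insert w Z) = rk M Z"
  shows "rk M (Z \<union> W) = rk M Z"
proof -
  obtain J where J: "J \<subseteq> Z" "indep M J" "card J = rk M Z" using rk_witness[OF M] .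
  have "\<not> indep M (insert e J)" if e: "e \<in> (Z \<union> W) - J" for e
  proof
    assume i: "indep M (insert e J)"
    have "rk M (insert e Z) = rk M Z"
      using e W by (cases "e \<in> Z") (simp_all add: insert_absorb)
    moreover have "card (insert e J) \<le> rk M (insert e Z)"
      using card_le_rk[OF M i] J(1) by blast
    ultimately show False using e J(3) indep_finite[OF M J(2)] by simp
  qed
  moreover have "J \<subseteq> Z \<union> W" using J(1) by blast
  ultimately show ?thesis using rk_eq_card_if_maximal[OF M J(2)] J(3) by simp
qed

lemma rk_insert_spanned_mono:
  assumes M: "matroid M" and e: "rk M (insert e A) = rk M A" and "A \<subseteq> B"
  shows "rk M (insert e B) = rk M B"
proof -
  have "insert e A \<union> B = insert e B" using \<open>A \<subseteq> B\<close> by blast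
  then have "rk M (insert e B) + rk M (insert e A \<inter> B) \<le> rk M A + rk M B"
    using rk_submod[OF M, of "insert e A" B] e by simp
  moreover have "rk M A \<le> rk M (insert e A \<inter> B)" using \<open>A \<subseteq> B\<close> by (intro rk_mono[OF M]) blast
  ultimately have "rk M (insert e B) \<le> rk M B" by linarith
  then show ?thesis using rk_insert_ge[OF M, of B e] by linarith
qed

lemma indep_singleton_simple:
  assumes M: "matroid M" and "simple M" and "e \<in> carrier M"
  shows "indep M {e}"
proof (rule ccontr)
  assume "\<not> indep M {e}"
  then have "circuit M {e}" using \<open>e \<in> carrier M\<close> indep_empty[OF M] unfolding circuit_def by simp
  then show False using \<open>simple M\<close> unfolding simple_def by fastforce
qed

lemma rk_singleton_simple: "matroid M \<Longrightarrow> simple M \<Longrightarrow> e \<in> carrier M \<Longrightarrow> rk M {e} = 1"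
  using indep_singleton_simple rk_indep by fastforce

lemma rk_pair_simple:
  assumes M: "matroid M" and "simple M" and "e \<in> carrier M" "f \<in> carrier M" "e \<noteq> f"
  shows "rk M {e, f} = 2"
proof -
  have "indep M {e, f}"
  proof (rule ccontr)
    assume "\<not> indep M {e, f}"
    moreover have "{e, f} - {e} = {f}" "{e, f} - {f} = {e}" using \<open>e \<noteq> f\<close> by auto
    ultimately have "circuit M {e, f}"
      using assms(3,4) indep_singleton_simple[OF M \<open>simple M\<close>] unfolding circuit_def by auto
    then show False using \<open>simple M\<close> \<open>e \<noteq> f\<close> unfolding simple_def by fastforce
  qed
  then show ?thesis using rk_indep[OF M, of "{e, f}"] \<open>e \<noteq> f\<close> by simp
qed

section \<open>Minors of the form \<open>(M / C) | F\<close>\<close>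

definition contract_restrict :: "'a matroid \<Rightarrow> 'a set \<Rightarrow> 'a set \<Rightarrow> 'a matroid" where
  "contract_restrict M C F =
     \<lparr>carrier = F, indep = (\<lambda>I. I \<subseteq> F \<and> rk M (I \<union> C) = card I + rk M C)\<rparr>"

lemma carrier_contract_restrict [simp]: "carrier (contract_restrict M C F) = F"
  by (simp add: contract_restrict_def)

lemma delete_contract_eq_contract_restrict:
  "delete (contract M C) D = contract_restrict M C (carrier M - C - D)"
  unfolding delete_def contract_def contract_restrict_def by (auto simp: fun_eq_iff)

lemma rk_contract_restrict:
  assumes M: "matroid M" and F: "F \<subseteq> carrier M"
  shows "rk (contract_restrict M C F) Y = rk M (Y \<inter> F \<union> C) - rk M C"
proof -
  let ?v = "rk M (Y \<inter> F \<union> C) - rk M C"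
  let ?S = "card ` {I. I \<subseteq> Y \<and> indep (contract_restrict M C F) I}"
  have fin: "finite ?S"
  proof -
    have "{I. I \<subseteq> Y \<and> indep (contract_restrict M C F) I} \<subseteq> Pow F"
      by (auto simp: contract_restrict_def)
    moreover have "finite F" using finite_subset[OF F matroid_finite_carrier[OF M]] .
    ultimately show ?thesis by (meson finite_Pow_iff finite_imageI finite_subset)
  qed
  have le: "n \<le> ?v" if "n \<in> ?S" for n
  proof -
    obtain I where I: "n = card I" "I \<subseteq> Y" "I \<subseteq> F" "rk M (I \<union> C) = card I + rk M C"
      using \<open>n \<in> ?S\<close> by (auto simp: contract_restrict_def)
    have "rk M (I \<union> C) \<le> rk M (Y \<inter> F \<union> C)" using I(2,3) by (intro rk_mono[OF M]) blast
    then show ?thesis using I(1,4) by linarith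
  qed
  have mem: "?v \<in> ?S"
  proof -
    obtain J where J: "J \<subseteq> C" "indep M J" "card J = rk M C" using rk_witness[OF M] .
    have "J \<subseteq> Y \<inter> F \<union> C" using J(1) by blast
    then obtain K where K: "J \<subseteq> K" "K \<subseteq> Y \<inter> F \<union> C" "indep M K" "card K = rk M (Y \<inter> F \<union> C)"
      by (rule indep_extend_to_rk[OF M J(2)])
    have fK: "finite K" using indep_finite[OF M K(3)] .
    have "card (K \<inter> C) \<le> rk M C" using card_le_rk[OF M indep_subset[OF M K(3), of "K \<inter> C"], of C] by blast
    moreover have "card J \<le> card (K \<inter> C)" using J(1) K(1) fK by (intro card_mono) auto
    ultimately have KC: "card (K \<inter> C) = rk M C" using J(3) by linarith
    have "card ((K - C) \<union> (K \<inter> C)) = card (K - C) + card (K \<inter> C)"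
      using fK by (intro card_Un_disjoint) auto
    moreover have "(K - C) \<union> (K \<inter> C) = K" by blast
    ultimately have cK: "card K = card (K - C) + card (K \<inter> C)" by simp
    have "card K \<le> rk M ((K - C) \<union> C)" using card_le_rk[OF M K(3), of "(K - C) \<union> C"] by blast
    moreover have "rk M ((K - C) \<union> C) \<le> rk M (Y \<inter> F \<union> C)" using K(2) by (intro rk_mono[OF M]) blast
    ultimately have "rk M ((K - C) \<union> C) = card (K - C) + rk M C" using K(4) cK KC by linarith
    moreover have "K - C \<subseteq> Y" "K - C \<subseteq> F" using K(2) by blast+
    ultimately have "card (K - C) \<in> ?S" by (auto simp: contract_restrict_def)
    moreover have "card (K - C) = ?v" using cK KC K(4) by linarith
    ultimately show ?thesis by simp
  qed
  show ?thesis unfolding rk_def[of "contract_restrict M C F"] by (rule Max_eqI[OF fin le mem])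
qed

lemma delete_contract_contract_restrict:
  assumes M: "matroid M" and F: "F \<subseteq> carrier M" and "C \<subseteq> F"
  shows "delete (contract (contract_restrict M C0 F) C) D = contract_restrict M (C0 \<union> C) (F - C - D)"
proof -
  have "rk (contract_restrict M C0 F) (I \<union> C) = card I + rk (contract_restrict M C0 F) C
      \<longleftrightarrow> rk M (I \<union> (C0 \<union> C)) = card I + rk M (C0 \<union> C)" if "I \<subseteq> F - C - D" for I
  proof -
    have "(I \<union> C) \<inter> F \<union> C0 = I \<union> (C0 \<union> C)" "C \<inter> F \<union> C0 = C0 \<union> C"
      using that \<open>C \<subseteq> F\<close> by blast+
    moreover have "rk M C0 \<le> rk M (I \<union> (C0 \<union> C))" "rk M C0 \<le> rk M (C0 \<union> C)"
      by (intro rk_mono[OF M]; blast)+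
    ultimately show ?thesis using rk_contract_restrict[OF M F] by auto
  qed
  then show ?thesis
    unfolding delete_def contract_def by (auto simp: contract_restrict_def fun_eq_iff)
qed

lemma conn_fun_contract_restrict:
  assumes M: "matroid M" and F: "F \<subseteq> carrier M" and "X \<subseteq> F"
  shows "conn_fun (contract_restrict M C F) X
    = int (rk M (X \<union> C)) + int (rk M (F - X \<union> C)) - int (rk M (F \<union> C)) - int (rk M C)"
proof -
  have "X \<inter> F = X" "(F - X) \<inter> F = F - X" "F \<inter> F = F" using \<open>X \<subseteq> F\<close> by blast+
  moreover have "rk M C \<le> rk M (Z \<union> C)" for Z by (rule rk_mono[OF M]) blast
  ultimately show ?thesis
    unfolding conn_fun_def carrier_contract_restrict rk_contract_restrict[OF M F] by (simp add: of_nat_diff)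
qed

section \<open>Parallel classes of a contraction\<close>

lemma loop_contract_iff:
  assumes "e \<in> carrier M - C"
  shows "loop (contract M C) e \<longleftrightarrow> rk M (insert e C) \<noteq> Suc (rk M C)"
  using assms unfolding loop_def circuit_def contract_def by simp

text \<open>For non-loops of \<open>M / C\<close>: \<open>e\<close> and \<open>f\<close> are equal or parallel in \<open>M / C\<close>.\<close>
definition same_point :: "'a matroid \<Rightarrow> 'a set \<Rightarrow> 'a \<Rightarrow> 'a \<Rightarrow> bool" where
  "same_point M C e f \<longleftrightarrow>
     rk M (insert e (insert f C)) = rk M (insert e C) \<and> rk M (insert e (insert f C)) = rk M (insert f C)"

lemma same_point_refl: "same_point M C e e"
  unfolding same_point_def by simp

lemma same_point_sym: "same_point M C e f \<Longrightarrow> same_point M C f e"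
  unfolding same_point_def by (simp add: insert_commute)

lemma same_point_trans:
  assumes M: "matroid M" and "same_point M C e f" "same_point M C f g"
  shows "same_point M C e g"
proof -
  have ef: "rk M (insert e (insert f C)) = rk M (insert f C)"
    and gf: "rk M (insert g (insert f C)) = rk M (insert f C)"
    and fe: "rk M (insert f C) = rk M (insert e C)" and fg: "rk M (insert f C) = rk M (insert g C)"
    using assms(2,3) unfolding same_point_def by (simp_all add: insert_commute)
  have "rk M (insert f C \<union> {e, g}) = rk M (insert f C)"
    using rk_Un_spanned[OF M, of "{e, g}" "insert f C"] ef gf by simp
  moreover have "rk M (insert e (insert g C)) \<le> rk M (insert f C \<union> {e, g})" by (rule rk_mono[OF M]) blast
  moreover have "rk M (insert e C) \<le> rk M (insert e (insert g C))" "rk M (insert g C) \<le> rk M (insert e (insert g C))"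
    by (rule rk_mono[OF M]; blast)+
  ultimately show ?thesis unfolding same_point_def using fe fg by linarith
qed

lemma rk_insert2_eq_iff_not_same_point:
  assumes M: "matroid M" and "rk M (insert g C) = Suc (rk M C)" "rk M (insert g' C) = Suc (rk M C)"
  shows "rk M (insert g (insert g' C)) = Suc (Suc (rk M C)) \<longleftrightarrow> \<not> same_point M C g g'"
proof -
  have "rk M (insert g' C) \<le> rk M (insert g (insert g' C))" by (rule rk_mono[OF M]) blast
  moreover have "rk M (insert g (insert g' C)) \<le> Suc (rk M (insert g' C))" by (rule rk_insert_le[OF M])
  ultimately show ?thesis using assms(2,3) unfolding same_point_def by (auto simp: insert_commute)
qed

lemma parallel_contract_iff:
  assumes M: "matroid M" and "e \<in> carrier M - C" "f \<in> carrier M - C" "e \<noteq> f"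
  shows "parallel (contract M C) e f \<longleftrightarrow>
    rk M (insert e C) = Suc (rk M C) \<and> rk M (insert f C) = Suc (rk M C) \<and> same_point M C e f"
proof -
  have "{e, f} - {e} = {f}" "{e, f} - {f} = {e}" "card {e, f} = 2" using assms(4) by auto
  then have "parallel (contract M C) e f \<longleftrightarrow> rk M (insert e (insert f C)) \<noteq> Suc (Suc (rk M C))
      \<and> rk M (insert e C) = Suc (rk M C) \<and> rk M (insert f C) = Suc (rk M C)"
    using assms(2-4) unfolding parallel_def circuit_def contract_def by (auto simp: insert_commute)
  moreover have "rk M (insert f C) \<le> rk M (insert e (insert f C))" "rk M (insert e C) \<le> rk M (insert e (insert f C))"
    by (rule rk_mono[OF M]; blast)+
  moreover have "rk M (insert e (insert f C)) \<le> Suc (rk M (insert f C))" by (rule rk_insert_le[OF M])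
  ultimately show ?thesis unfolding same_point_def by auto
qed

text \<open>A set of representatives of the parallel classes of non-loops of \<open>M / C\<close>;
  these are exactly the ground sets of the simplifications of \<open>M / C\<close>.\<close>
definition point_transversal :: "'a matroid \<Rightarrow> 'a set \<Rightarrow> 'a set \<Rightarrow> bool" where
  "point_transversal M C G \<longleftrightarrow> G \<subseteq> carrier M - C
     \<and> (\<forall>g\<in>G. rk M (insert g C) = Suc (rk M C))
     \<and> (\<forall>g\<in>G. \<forall>g'\<in>G. g \<noteq> g' \<longrightarrow> rk M (insert g (insert g' C)) = Suc (Suc (rk M C)))
     \<and> (\<forall>e\<in>carrier M - C. rk M (insert e C) = Suc (rk M C) \<longrightarrow> (\<exists>g\<in>G. same_point M C e g))"

lemma point_transversal_eq_if_same_point: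
  assumes "point_transversal M C G" "g \<in> G" "g' \<in> G" "same_point M C g g'"
  shows "g = g'"
  using assms unfolding point_transversal_def same_point_def by force

lemma simp_deletion_contract_iff:
  assumes M: "matroid M" and D: "D \<subseteq> carrier M - C"
  shows "simp_deletion (contract M C) D \<longleftrightarrow> point_transversal M C (carrier M - C - D)"
    (is "_ \<longleftrightarrow> point_transversal M C ?G")
proof -
  have car: "carrier (contract M C) = carrier M - C" by (simp add: contract_def)
  have nonloop: "\<not> loop (contract M C) e \<longleftrightarrow> rk M (insert e C) = Suc (rk M C)" if "e \<in> carrier M - C" for e
    using loop_contract_iff[OF that] by simp
  have par: "parallel (contract M C) e f \<longleftrightarrow>
      rk M (insert e C) = Suc (rk M C) \<and> rk M (insert f C) = Suc (rk M C) \<and> same_point M C e f"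
    if "e \<in> carrier M - C" "f \<in> carrier M - C" "e \<noteq> f" for e f
    using parallel_contract_iff[OF M that] .
  note distinct = rk_insert2_eq_iff_not_same_point[OF M]
  show ?thesis
  proof
    assume sd: "simp_deletion (contract M C) D"
    have G_nonloop: "rk M (insert g C) = Suc (rk M C)" if "g \<in> ?G" for g
      using sd that nonloop unfolding simp_deletion_def car by blast
    have "rk M (insert g (insert g' C)) = Suc (Suc (rk M C))" if "g \<in> ?G" "g' \<in> ?G" "g \<noteq> g'" for g g'
    proof -
      have "\<not> parallel (contract M C) g g'" using sd that unfolding simp_deletion_def car by blast
      then show ?thesis using par[of g g'] distinct G_nonloop that by blast
    qed
    moreover have "\<exists>g\<in>?G. same_point M C e g"
      if e: "e \<in> carrier M - C" "rk M (insert e C) = Suc (rk M C)" for e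
    proof -
      obtain f where f: "f \<in> ?G" "f = e \<or> parallel (contract M C) e f"
        using sd e nonloop unfolding simp_deletion_def car by blast
      then have "same_point M C e f"
        using par[of e f] e(1) same_point_refl[of M C e] by (cases "f = e") auto
      then show ?thesis using f(1) by blast
    qed
    ultimately show "point_transversal M C ?G" using G_nonloop unfolding point_transversal_def by blast
  next
    assume G: "point_transversal M C ?G"
    have "\<not> parallel (contract M C) e f" if "e \<in> ?G" "f \<in> ?G" for e f
    proof
      assume p: "parallel (contract M C) e f"
      then have "e \<noteq> f" unfolding parallel_def by blast
      then show False using p G that par[of e f] distinct[of e C f] unfolding point_transversal_def by auto
    qed
    moreover have "\<exists>f\<in>?G. f = e \<or> parallel (contract M C) e f"
      if e: "e \<in> carrier M - C" "\<not> loop (contract M C) e" for e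
    proof -
      obtain g where g: "g \<in> ?G" "same_point M C e g"
        using G e nonloop unfolding point_transversal_def by blast
      then have "g = e \<or> parallel (contract M C) e g"
        using G e nonloop par[of e g] unfolding point_transversal_def by blast
      then show ?thesis using g(1) by blast
    qed
    moreover have "e \<in> D" if "e \<in> carrier M - C" "loop (contract M C) e" for e
      using G that nonloop unfolding point_transversal_def by blast
    ultimately show "simp_deletion (contract M C) D" using D unfolding simp_deletion_def car by blast
  qed
qed

lemma point_transversal_exists:
  assumes M: "matroid M" obtains G where "point_transversal M C G"
proof -
  define nl where "nl = {e \<in> carrier M - C. rk M (insert e C) = Suc (rk M C)}"
  define rep where "rep e = (SOME f. f \<in> nl \<and> same_point M C f e)" for e
  have rep: "rep e \<in> nl \<and> same_point M C (rep e) e" if "e \<in> nl" for e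
    unfolding rep_def by (rule someI[of _ e]) (simp add: that same_point_refl)
  have rep_eq: "rep e = rep e'" if "same_point M C e e'" for e e'
  proof -
    have "same_point M C f e \<longleftrightarrow> same_point M C f e'" for f
      using same_point_trans[OF M _ that, of f] same_point_trans[OF M _ same_point_sym[OF that], of f]
      by blast
    then show ?thesis unfolding rep_def by simp
  qed
  have "point_transversal M C (rep ` nl)"
    unfolding point_transversal_def
  proof (intro conjI ballI impI)
    show "rep ` nl \<subseteq> carrier M - C" using rep unfolding nl_def by blast
    show "rk M (insert g C) = Suc (rk M C)" if "g \<in> rep ` nl" for g
      using that rep unfolding nl_def by blast
    fix g g' assume g: "g \<in> rep ` nl" "g' \<in> rep ` nl" "g \<noteq> g'"
    then obtain u v where uv: "u \<in> nl" "v \<in> nl" "g = rep u" "g' = rep v" by blast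
    have "\<not> same_point M C g g'"
    proof
      assume gg': "same_point M C g g'"
      have ug: "same_point M C u g" using same_point_sym[of M C "rep u" u] rep[OF uv(1)] uv(3) by simp
      have g'v: "same_point M C g' v" using rep[OF uv(2)] uv(4) by blast
      have "same_point M C u v" using same_point_trans[OF M same_point_trans[OF M ug gg'] g'v] .
      then show False using rep_eq uv g(3) by blast
    qed
    moreover have "rk M (insert g C) = Suc (rk M C)" "rk M (insert g' C) = Suc (rk M C)"
      using rep uv unfolding nl_def by blast+
    ultimately show "rk M (insert g (insert g' C)) = Suc (Suc (rk M C))"
      using rk_insert2_eq_iff_not_same_point[OF M, of g C g'] by blast
  next
    fix e assume "e \<in> carrier M - C" "rk M (insert e C) = Suc (rk M C)"
    then have "e \<in> nl" unfolding nl_def by blast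
    then show "\<exists>g\<in>rep ` nl. same_point M C e g" using rep[of e] same_point_sym[of M C "rep e" e] by blast
  qed
  then show ?thesis using that by blast
qed

lemma si_contract_eq:
  assumes M: "matroid M"
  obtains G where "si (contract M C) = contract_restrict M C G" "point_transversal M C G"
proof -
  obtain G0 where G0: "point_transversal M C G0" using point_transversal_exists[OF M] .
  have "carrier M - C - (carrier M - C - G0) = G0" using G0 unfolding point_transversal_def by blast
  then have "simp_deletion (contract M C) (carrier M - C - G0)"
    using simp_deletion_contract_iff[OF M, of "carrier M - C - G0" C] G0 by (metis Diff_subset)
  then have D: "simp_deletion (contract M C) (SOME D. simp_deletion (contract M C) D)" by (rule someI)
  define G where "G = carrier M - C - (SOME D. simp_deletion (contract M C) D)"
  have "si (contract M C) = contract_restrict M C G"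
    unfolding si_def G_def delete_contract_eq_contract_restrict by (simp add: contract_def)
  moreover have "(SOME D. simp_deletion (contract M C) D) \<subseteq> carrier M - C"
    using D unfolding simp_deletion_def by (simp add: contract_def)
  then have "point_transversal M C G"
    using simp_deletion_contract_iff[OF M] D unfolding G_def by blast
  ultimately show ?thesis using that by blast
qed

lemma rk_point_transversal_ge:
  assumes M: "matroid M" and G: "point_transversal M C G" and "Q \<subseteq> G"
  shows "rk M C + min 2 (card Q) \<le> rk M (Q \<union> C)"
proof -
  have one: "Suc (rk M C) \<le> rk M (Q \<union> C)" if "g \<in> Q" for g
  proof -
    have "rk M (insert g C) \<le> rk M (Q \<union> C)" using that by (intro rk_mono[OF M]) blast
    moreover have "rk M (insert g C) = Suc (rk M C)"
      using G that \<open>Q \<subseteq> G\<close> unfolding point_transversal_def by blast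
    ultimately show ?thesis by simp
  qed
  have two: "Suc (Suc (rk M C)) \<le> rk M (Q \<union> C)" if "g \<in> Q" "g' \<in> Q" "g \<noteq> g'" for g g'
  proof -
    have "rk M (insert g (insert g' C)) \<le> rk M (Q \<union> C)" using that by (intro rk_mono[OF M]) blast
    moreover have "rk M (insert g (insert g' C)) = Suc (Suc (rk M C))"
      using G that \<open>Q \<subseteq> G\<close> unfolding point_transversal_def by blast
    ultimately show ?thesis by simp
  qed
  consider "Q = {}" | g where "Q = {g}" | g g' where "g \<in> Q" "g' \<in> Q" "g \<noteq> g'" by blast
  then show ?thesis
  proof cases
    case 1
    then show ?thesis by simp
  next
    case 2
    then show ?thesis using one[of g] by simp
  next
    case 3
    then show ?thesis using two[OF 3] by linarith
  qed
qed

lemma rk_point_transversal_spans: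
  assumes M: "matroid M" and G: "point_transversal M C G" and "C \<subseteq> carrier M"
  shows "rk M (G \<union> C) = rk M (carrier M)"
proof -
  have "rk M (insert e (G \<union> C)) = rk M (G \<union> C)" if e: "e \<in> carrier M" for e
  proof (cases "e \<in> C")
    case True
    then show ?thesis by (simp add: insert_absorb)
  next
    case False
    show ?thesis
    proof (cases "rk M (insert e C) = Suc (rk M C)")
      case True
      then obtain g where "g \<in> G" "same_point M C e g"
        using G e False unfolding point_transversal_def by blast
      then have "rk M (insert e (insert g C)) = rk M (insert g C)" "insert g C \<subseteq> G \<union> C"
        unfolding same_point_def by auto
      then show ?thesis by (rule rk_insert_spanned_mono[OF M])
    next
      case False
      then have "rk M (insert e C) = rk M C"
        using rk_insert_le[OF M, of e C] rk_insert_ge[OF M, of C e] by linarith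
      then show ?thesis by (rule rk_insert_spanned_mono[OF M]) blast
    qed
  qed
  then have "rk M ((G \<union> C) \<union> carrier M) = rk M (G \<union> C)" using rk_Un_spanned[OF M] by blast
  moreover have "(G \<union> C) \<union> carrier M = carrier M"
    using G \<open>C \<subseteq> carrier M\<close> unfolding point_transversal_def by blast
  ultimately show ?thesis by simp
qed

lemma rk_image_same_point:
  assumes M: "matroid M" and \<phi>: "\<forall>z\<in>Z. same_point M C z (\<phi> z)"
  shows "rk M (\<phi> ` Z \<union> C) = rk M (Z \<union> C)"
proof -
  have "rk M (insert w (\<phi> ` Z \<union> C)) = rk M (\<phi> ` Z \<union> C)" if "w \<in> Z" for w
  proof (rule rk_insert_spanned_mono[OF M])
    show "rk M (insert w (insert (\<phi> w) C)) = rk M (insert (\<phi> w) C)"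
      using \<phi> that unfolding same_point_def by blast
  qed (use that in blast)
  then have "rk M ((\<phi> ` Z \<union> C) \<union> Z) = rk M (\<phi> ` Z \<union> C)" using rk_Un_spanned[OF M] by blast
  moreover have "rk M (insert w (Z \<union> C)) = rk M (Z \<union> C)" if w: "w \<in> \<phi> ` Z" for w
  proof -
    obtain z where z: "z \<in> Z" "w = \<phi> z" using w by blast
    have "rk M (insert w (insert z C)) = rk M (insert z C)"
      using \<phi> z unfolding same_point_def by (simp add: insert_commute)
    then show ?thesis by (rule rk_insert_spanned_mono[OF M]) (use z in blast)
  qed
  then have "rk M ((Z \<union> C) \<union> \<phi> ` Z) = rk M (Z \<union> C)" using rk_Un_spanned[OF M] by blast
  moreover have "(\<phi> ` Z \<union> C) \<union> Z = (Z \<union> C) \<union> \<phi> ` Z" by blast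
  ultimately show ?thesis by simp
qed

text \<open>Elements of \<open>insert x H\<close> that are parallel in \<open>M / C\<close> would span a line of \<open>M / C\<close>
  containing \<open>x\<close>, contradicting that \<open>H\<close> consists of distinct non-loops of \<open>M / (C \<union> {x})\<close>.\<close>
lemma inj_on_same_point:
  assumes M: "matroid M" and H: "point_transversal M (insert x C) H"
    and x: "rk M (insert x C) = Suc (rk M C)"
    and \<phi>: "\<forall>z\<in>insert x H. same_point M C z (\<phi> z)"
  shows "inj_on \<phi> (insert x H)"
proof (rule inj_onI, rule ccontr)
  fix u v assume u: "u \<in> insert x H" and v: "v \<in> insert x H" and eq: "\<phi> u = \<phi> v" and "u \<noteq> v"
  let ?g = "\<phi> u"
  have "rk M (insert u (insert ?g C)) = rk M (insert ?g C)"
    using \<phi> u unfolding same_point_def by blast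
  moreover have "rk M (insert v (insert (\<phi> v) C)) = rk M (insert (\<phi> v) C)"
    using \<phi> v unfolding same_point_def by blast
  then have "rk M (insert v (insert ?g C)) = rk M (insert ?g C)" using eq by simp
  ultimately have "rk M (insert ?g C \<union> {u, v}) = rk M (insert ?g C)"
    using rk_Un_spanned[OF M, of "{u, v}" "insert ?g C"] by simp
  moreover have "rk M (insert ?g C) \<le> Suc (rk M C)" by (rule rk_insert_le[OF M])
  moreover have "rk M (insert x (insert u (insert v C))) \<le> Suc (rk M (insert ?g C \<union> {u, v}))"
    using rk_mono[OF M, of "insert x (insert u (insert v C))" "insert x (insert ?g C \<union> {u, v})"]
      rk_insert_le[OF M, of x "insert ?g C \<union> {u, v}"] by fastforce
  moreover have "rk M (insert u (insert v C)) \<le> rk M (insert ?g C \<union> {u, v})"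
    by (rule rk_mono[OF M]) blast
  ultimately have line: "rk M (insert u (insert v C)) \<le> Suc (rk M C)"
    and plane: "rk M (insert x (insert u (insert v C))) \<le> Suc (Suc (rk M C))" by linarith+
  have H2: "\<forall>h\<in>H. rk M (insert h (insert x C)) = Suc (Suc (rk M C))"
    and H3: "\<forall>h\<in>H. \<forall>h'\<in>H. h \<noteq> h' \<longrightarrow> rk M (insert h (insert h' (insert x C))) = Suc (Suc (Suc (rk M C)))"
    using H x unfolding point_transversal_def by auto
  consider "u = x" "v \<in> H" | "v = x" "u \<in> H" | "u \<in> H" "v \<in> H"
    using u v \<open>u \<noteq> v\<close> by blast
  then show False
  proof cases
    case 1
    then show False using line H2 by (simp add: insert_commute)
  next
    case 2
    then show False using line H2 by simp
  next
    case 3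
    then show False using plane H3 \<open>u \<noteq> v\<close> by (simp add: insert_commute)
  qed
qed

lemma iso_of_bij_indep:
  assumes "iso A N" and \<phi>: "bij_betw \<phi> (carrier A) (carrier B)"
    and ind: "\<forall>Y \<subseteq> carrier A. indep B (\<phi> ` Y) \<longleftrightarrow> indep A Y"
  shows "iso B N"
proof -
  obtain f where f: "bij_betw f (carrier A) (carrier N)"
    "\<forall>Y \<subseteq> carrier A. indep A Y \<longleftrightarrow> indep N (f ` Y)"
    using \<open>iso A N\<close> unfolding iso_def by blast
  let ?\<psi> = "the_inv_into (carrier A) \<phi>"
  have \<psi>: "bij_betw ?\<psi> (carrier B) (carrier A)" using bij_betw_the_inv_into[OF \<phi>] .
  have "indep B X \<longleftrightarrow> indep N ((f \<circ> ?\<psi>) ` X)" if X: "X \<subseteq> carrier B" for X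
  proof -
    have Y: "?\<psi> ` X \<subseteq> carrier A" using X \<psi> by (auto simp: bij_betw_def)
    have "\<forall>y\<in>X. \<phi> (?\<psi> y) = y"
      using X \<phi> f_the_inv_into_f[of \<phi> "carrier A"] unfolding bij_betw_def by auto
    then have "\<phi> ` ?\<psi> ` X = X" by (simp add: image_image)
    then show ?thesis using ind f(2) Y by (metis image_comp)
  qed
  then show ?thesis unfolding iso_def using bij_betw_trans[OF \<psi> f(1)] by blast
qed

lemma iso_contract_restrict_image_same_point:
  assumes M: "matroid M" and inj: "inj_on \<phi> F" and \<phi>: "\<forall>z\<in>F \<union> K. same_point M C z (\<phi> z)"
    and "iso (contract_restrict M (C \<union> K) F) N"
  shows "iso (contract_restrict M (C \<union> \<phi> ` K) (\<phi> ` F)) N"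
proof -
  have rk_eq: "rk M (\<phi> ` Y \<union> (C \<union> \<phi> ` K)) = rk M (Y \<union> (C \<union> K))" if "Y \<subseteq> F" for Y
  proof -
    have "\<forall>z\<in>Y \<union> K. same_point M C z (\<phi> z)" using \<phi> that by blast
    from rk_image_same_point[OF M this] show ?thesis by (simp add: image_Un Un_ac)
  qed
  have "indep (contract_restrict M (C \<union> \<phi> ` K) (\<phi> ` F)) (\<phi> ` Y)
      \<longleftrightarrow> indep (contract_restrict M (C \<union> K) F) Y" if Y: "Y \<subseteq> F" for Y
  proof -
    have "card (\<phi> ` Y) = card Y" using inj_on_subset[OF inj Y] by (rule card_image)
    moreover have "rk M (C \<union> \<phi> ` K) = rk M (C \<union> K)" using rk_eq[of "{}"] by simp
    ultimately show ?thesis using rk_eq[OF Y] Y by (auto simp: contract_restrict_def)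
  qed
  moreover have "bij_betw \<phi> F (\<phi> ` F)" using inj by (rule inj_on_imp_bij_betw)
  ultimately show ?thesis using iso_of_bij_indep[OF assms(4), of \<phi>] by simp
qed

text \<open>Contracting \<open>\<phi> x\<close> in \<open>M / C\<close> plays the role of contracting \<open>x\<close>, so every minor of
  \<open>(M / (C \<union> {x})) | H\<close> reappears, via \<open>\<phi>\<close>, as a minor of \<open>(M / C) | G\<close>.\<close>
lemma has_minor_contract_restrict_same_point:
  assumes M: "matroid M" and "G \<subseteq> carrier M" "H \<subseteq> carrier M" "x \<notin> H"
    and inj: "inj_on \<phi> (insert x H)" and img: "\<phi> ` insert x H \<subseteq> G"
    and \<phi>: "\<forall>z\<in>insert x H. same_point M C z (\<phi> z)"
    and N: "has_minor (contract_restrict M (insert x C) H) N"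
  shows "has_minor (contract_restrict M C G) N"
proof -
  obtain C1 D1 where C1: "C1 \<subseteq> H" "D1 \<subseteq> H"
    and iso1: "iso (delete (contract (contract_restrict M (insert x C) H) C1) D1) N"
    using N unfolding has_minor_def carrier_contract_restrict by blast
  define F where "F = H - C1 - D1"
  define C' where "C' = \<phi> ` insert x C1"
  define D' where "D' = G - C' - \<phi> ` F"
  have FH: "F \<subseteq> insert x H" "insert x C1 \<subseteq> insert x H" using C1 unfolding F_def by blast+
  have "insert x C \<union> C1 = C \<union> insert x C1" by blast
  then have "delete (contract (contract_restrict M (insert x C) H) C1) D1
      = contract_restrict M (C \<union> insert x C1) F"
    unfolding F_def using delete_contract_contract_restrict[OF M \<open>H \<subseteq> carrier M\<close> C1(1)] by simp
  then have "iso (contract_restrict M (C \<union> insert x C1) F) N" using iso1 by simp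
  moreover have "\<forall>z\<in>F \<union> insert x C1. same_point M C z (\<phi> z)" using \<phi> FH by blast
  ultimately have iso2: "iso (contract_restrict M (C \<union> C') (\<phi> ` F)) N"
    unfolding C'_def using iso_contract_restrict_image_same_point[OF M inj_on_subset[OF inj FH(1)]] by blast
  have C'G: "C' \<subseteq> G" using img C1(1) unfolding C'_def by blast
  have "G - C' - D' = \<phi> ` F"
  proof -
    have "\<phi> ` F \<inter> C' = \<phi> ` (F \<inter> insert x C1)"
      unfolding C'_def using inj_on_image_Int[OF inj FH] by (rule sym)
    moreover have "F \<inter> insert x C1 = {}" unfolding F_def using \<open>x \<notin> H\<close> by blast
    ultimately show ?thesis using img FH(1) unfolding D'_def by blast
  qed
  then have "delete (contract (contract_restrict M C G) C') D' = contract_restrict M (C \<union> C') (\<phi> ` F)"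
    using delete_contract_contract_restrict[OF M \<open>G \<subseteq> carrier M\<close> C'G, of C D'] by (simp only:)
  then have "iso (delete (contract (contract_restrict M C G) C') D') N" using iso2 by (simp only:)
  moreover have "C' \<inter> D' = {}" "D' \<subseteq> G" unfolding D'_def by blast+
  ultimately show ?thesis unfolding has_minor_def using C'G by auto
qed

lemma has_minor_contract_restrict_insert:
  assumes M: "matroid M" and "G \<subseteq> carrier M" and H: "point_transversal M (insert x C) H"
    and x: "x \<in> carrier M" "rk M (insert x C) = Suc (rk M C)"
    and \<phi>: "\<forall>e\<in>carrier M - C. \<phi> e \<in> G \<and> same_point M C e (\<phi> e)"
    and N: "has_minor (contract_restrict M (insert x C) H) N"
  shows "has_minor (contract_restrict M C G) N"
proof -
  have xH: "insert x H \<subseteq> carrier M - C" "x \<notin> H"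
    using H x unfolding point_transversal_def by (auto simp: insert_absorb)
  have \<phi>xH: "\<phi> ` insert x H \<subseteq> G" "\<forall>z\<in>insert x H. same_point M C z (\<phi> z)"
    using \<phi> xH(1) by (auto simp del: insert_iff)
  have "H \<subseteq> carrier M" using xH(1) by blast
  from has_minor_contract_restrict_same_point[OF M \<open>G \<subseteq> carrier M\<close> this xH(2)
      inj_on_same_point[OF M H x(2) \<phi>xH(2)] \<phi>xH N]
  show ?thesis .
qed

section \<open>Connectivity and hyperplanes\<close>

lemma three_connected_conn_fun_ge:
  assumes "three_connected M" and "X \<subseteq> carrier M"
  shows "int (min 2 (min (card X) (card (carrier M - X)))) \<le> conn_fun M X"
proof -
  let ?k = "min 2 (min (card X) (card (carrier M - X)))"
  have "\<not> k_separation M ?k X" using assms(1) unfolding three_connected_def by simp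
  then show ?thesis using assms(2) unfolding k_separation_def by linarith
qed

lemma k_separation_compl:
  assumes "k_separation M k X" shows "k_separation M k (carrier M - X)"
proof -
  have "carrier M - (carrier M - X) = X" using assms unfolding k_separation_def by blast
  then show ?thesis using assms unfolding k_separation_def conn_fun_def by auto
qed

lemma subset_cl: "X \<subseteq> carrier M \<Longrightarrow> X \<subseteq> cl M X"
  unfolding cl_def by (auto simp: insert_absorb)

lemma rk_cl:
  assumes M: "matroid M" and "X \<subseteq> carrier M" shows "rk M (cl M X) = rk M X"
proof -
  have "\<forall>w\<in>cl M X. rk M (insert w X) = rk M X" unfolding cl_def by blast
  then have "rk M (X \<union> cl M X) = rk M X" by (rule rk_Un_spanned[OF M])
  moreover have "X \<union> cl M X = cl M X" using subset_cl[OF \<open>X \<subseteq> carrier M\<close>] by blast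
  ultimately show ?thesis by simp
qed

lemma card_basis:
  assumes M: "matroid M" and B: "basis M B" shows "card B = rk M (carrier M)"
proof -
  have "indep M B" using B unfolding basis_def by blast
  moreover have "\<forall>e\<in>carrier M - B. \<not> indep M (insert e B)" using B unfolding basis_def by blast
  ultimately show ?thesis using rk_eq_card_if_maximal[OF M] indep_subset_carrier[OF M] by blast
qed

lemma cocircuit_compl_cl:
  assumes M: "matroid M" and X: "X \<subseteq> carrier M" and r: "Suc (rk M X) = rk M (carrier M)"
  shows "cocircuit M (carrier M - cl M X)"
proof -
  let ?F = "cl M X"
  have rF: "rk M ?F = rk M X" using rk_cl[OF M X] .
  have XF: "X \<subseteq> ?F" using subset_cl[OF X] .
  have "\<not> indep (dual M) (carrier M - ?F)"
  proof
    assume "indep (dual M) (carrier M - ?F)"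
    then obtain B where B: "basis M B" "(carrier M - ?F) \<inter> B = {}" unfolding dual_def by auto
    have iB: "indep M B" using B(1) unfolding basis_def by blast
    then have "B \<subseteq> ?F" using indep_subset_carrier[OF M iB] B(2) by blast
    then have "card B \<le> rk M ?F" using card_le_rk[OF M iB] by blast
    then show False using card_basis[OF M B(1)] r rF by linarith
  qed
  moreover have "indep (dual M) (carrier M - ?F - {e})" if e: "e \<in> carrier M - ?F" for e
  proof -
    have "rk M (insert e X) \<noteq> rk M X" using e unfolding cl_def by blast
    then have "rk M (carrier M) \<le> rk M (insert e X)" using r rk_insert_ge[OF M, of X e] by linarith
    moreover have "insert e X \<subseteq> insert e ?F" using XF by blast
    ultimately have re: "rk M (carrier M) \<le> rk M (insert e ?F)" using rk_mono[OF M] by (meson le_trans)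
    obtain J where J: "J \<subseteq> insert e ?F" "indep M J" "card J = rk M (insert e ?F)"
      using rk_witness[OF M] .
    have "basis M J" unfolding basis_def
    proof (intro conjI allI impI)
      fix Y assume Y: "indep M Y \<and> J \<subseteq> Y"
      have "card Y \<le> rk M (carrier M)" using card_le_rk[OF M _ indep_subset_carrier[OF M]] Y by blast
      then have "card Y \<le> card J" using J(3) re by linarith
      then show "Y = J" using card_seteq[OF indep_finite[OF M]] Y by blast
    qed (rule J(2))
    moreover have "(carrier M - ?F - {e}) \<inter> J = {}" using J(1) by blast
    ultimately show ?thesis unfolding dual_def by auto
  qed
  ultimately show ?thesis unfolding cocircuit_def circuit_def by (simp add: dual_def)
qed

lemma rk_compl_hyperplane_three_connected:
  assumes M: "matroid M" and "three_connected M" and F: "F \<subseteq> carrier M"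
    and r: "Suc (rk M F) = rk M (carrier M)" and "2 \<le> rk M F" and "carrier M - F \<noteq> {}"
  shows "3 \<le> rk M (carrier M - F)"
proof -
  let ?C = "carrier M - F"
  have fin: "finite F" "finite ?C" using finite_subset[OF F matroid_finite_carrier[OF M]]
    matroid_finite_carrier[OF M] by auto
  have conn: "conn_fun M ?C = int (rk M ?C) - 1"
    using r F unfolding conn_fun_def by (simp add: double_diff)
  have "carrier M - ?C = F" using F by blast
  then have bound: "int (min 2 (min (card ?C) (card F))) \<le> conn_fun M ?C"
    using three_connected_conn_fun_ge[OF \<open>three_connected M\<close>, of ?C] by simp
  have cF: "2 \<le> card F" using rk_le_card[OF M fin(1)] \<open>2 \<le> rk M F\<close> by linarith
  have "1 \<le> card ?C" using fin(2) \<open>?C \<noteq> {}\<close> by (simp add: Suc_le_eq card_gt_0_iff)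
  then have "2 \<le> rk M ?C" using bound conn cF by linarith
  then have "2 \<le> card ?C" using rk_le_card[OF M fin(2)] by linarith
  then show ?thesis using bound conn cF by linarith
qed

section \<open>The rank count\<close>

lemma separation_rank_arith:
  fixes R a a' b s t k cA cB :: nat
  assumes "k < 3" "R + 1 \<le> a + b" "a + b < R + 1 + k" "k + 1 \<le> a" "k + 1 \<le> b"
    "a \<le> a'" "a' \<le> a + 1" "a' \<le> R"
    "2 \<le> s" "s \<le> a'" "s \<le> cA + 2" "2 \<le> t" "t \<le> b" "t \<le> cB + 2"
    "R + 2 + min 2 (min cA cB) \<le> s + t"
  shows "a' = a + 1 \<and> a + 1 = R \<and> 2 \<le> a \<and> b \<le> 3 \<and> (3 \<le> b \<longrightarrow> 3 \<le> a)"
  using assms unfolding min_def by (auto split: if_splits)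

lemma lifted_separation_ranks:
  fixes M :: "'a matroid" and As Bs H :: "'a set" and x p :: 'a and k :: nat
  defines "a \<equiv> rk M (As \<union> {p})" and "b \<equiv> rk M (Bs \<union> {p})" and "R \<equiv> rk M (carrier M)"
  assumes M: "matroid M" and "simple M" and xp: "x \<in> carrier M" "p \<in> carrier M" "x \<noteq> p"
    and H: "point_transversal M {x, p} H" and T: "three_connected (contract_restrict M {x, p} H)"
    and cover: "carrier M \<subseteq> insert p (As \<union> Bs)" "As \<subseteq> carrier M" "Bs \<subseteq> carrier M" "x \<in> Bs"
    and sep: "k < 3" "k + 1 \<le> a" "k + 1 \<le> b" "a + b < R + 1 + k"
  shows "rk M (insert x (As \<union> {p})) = a + 1 \<and> a + 1 = R \<and> 2 \<le> a \<and> b \<le> 3 \<and> (3 \<le> b \<longrightarrow> 3 \<le> a)"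
proof -
  define AT where "AT = H \<inter> As"
  define BT where "BT = H - As"
  define a' where "a' = rk M (insert x (As \<union> {p}))"
  define s where "s = rk M (AT \<union> {x, p})"
  define t where "t = rk M (BT \<union> {x, p})"
  have rp: "rk M {p} = 1" using rk_singleton_simple[OF M \<open>simple M\<close> xp(2)] .
  have rxp: "rk M {x, p} = 2" using rk_pair_simple[OF M \<open>simple M\<close> xp] .
  have HE: "H \<subseteq> carrier M - {x, p}" using H unfolding point_transversal_def by blast
  have HE': "H \<subseteq> carrier M" using HE by blast
  have finH: "finite H" using finite_subset[OF HE] matroid_finite_carrier[OF M] by blast
  have RH: "rk M (H \<union> {x, p}) = R"
    unfolding R_def using rk_point_transversal_spans[OF M H] xp by simp
  have "rk M ((As \<union> {p}) \<union> (Bs \<union> {p})) + rk M ((As \<union> {p}) \<inter> (Bs \<union> {p})) \<le> a + b"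
    unfolding a_def b_def by (rule rk_submod[OF M])
  moreover have "(As \<union> {p}) \<union> (Bs \<union> {p}) = carrier M" using cover xp by blast
  moreover have "rk M {p} \<le> rk M ((As \<union> {p}) \<inter> (Bs \<union> {p}))" by (rule rk_mono[OF M]) blast
  ultimately have ab: "R + 1 \<le> a + b" unfolding R_def using rp by simp
  have a': "a \<le> a'" "a' \<le> a + 1" "a' \<le> R"
    unfolding a_def a'_def R_def using rk_insert_ge[OF M] rk_insert_le[OF M] cover xp
    by (auto intro!: rk_mono[OF M])
  have "BT \<subseteq> Bs" using HE cover unfolding BT_def by blast
  then have st: "s \<le> a'" "t \<le> b"
    unfolding s_def t_def a'_def b_def AT_def using cover by (auto intro!: rk_mono[OF M])
  have st2: "2 \<le> s" "2 \<le> t" unfolding s_def t_def using rk_mono[OF M] rxp by (metis Un_upper2)+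
  have card_bound: "s \<le> card AT + 2" "t \<le> card BT + 2"
    unfolding s_def t_def AT_def BT_def using rk_Un_le_card_add[OF M] finH rxp by (metis finite_Diff finite_Int)+
  have "int (min 2 (min (card AT) (card BT))) \<le> conn_fun (contract_restrict M {x, p} H) AT"
    using three_connected_conn_fun_ge[OF T, of AT] unfolding AT_def BT_def by (simp add: Diff_Int)
  moreover have "conn_fun (contract_restrict M {x, p} H) AT = int s + int t - int R - 2"
    using conn_fun_contract_restrict[OF M HE' Int_lower1, of "{x, p}" As] RH rxp
    unfolding s_def t_def AT_def BT_def by (simp add: Diff_Int)
  ultimately have "R + 2 + min 2 (min (card AT) (card BT)) \<le> s + t" by linarith
  then show ?thesis
    using separation_rank_arith[OF sep(1) ab sep(4,2,3) a' st2(1) st(1) card_bound(1) st2(2) st(2) card_bound(2)]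
    unfolding a'_def by blast
qed

lemma rank3_cocircuit_of_separation:
  fixes M :: "'a matroid" and As Bs H :: "'a set" and x p :: 'a and k :: nat
  defines "a \<equiv> rk M (As \<union> {p})" and "b \<equiv> rk M (Bs \<union> {p})" and "R \<equiv> rk M (carrier M)"
  assumes M: "matroid M" and "three_connected M" and "simple M"
    and xp: "x \<in> carrier M" "p \<in> carrier M" "x \<noteq> p"
    and H: "point_transversal M {x, p} H" and T: "three_connected (contract_restrict M {x, p} H)"
    and cover: "carrier M \<subseteq> insert p (As \<union> Bs)" "As \<subseteq> carrier M" "Bs \<subseteq> carrier M" "x \<in> Bs"
    and sep: "k < 3" "k + 1 \<le> a" "k + 1 \<le> b" "a + b < R + 1 + k"
  shows "4 \<le> R \<and> (\<exists>Cs. cocircuit M Cs \<and> rk M Cs = 3 \<and> p \<in> cl M Cs - Cs \<and> x \<in> Cs)"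
proof -
  have ranks: "rk M (insert x (As \<union> {p})) = a + 1" "a + 1 = R" "2 \<le> a" "b \<le> 3" "3 \<le> b \<Longrightarrow> 3 \<le> a"
    using lifted_separation_ranks[OF M \<open>simple M\<close> xp H T cover sep[unfolded a_def b_def R_def]]
    unfolding a_def b_def R_def by auto
  define F where "F = cl M (As \<union> {p})"
  define Cs where "Cs = carrier M - F"
  have AsE: "As \<union> {p} \<subseteq> carrier M" using cover xp by blast
  have rF: "rk M F = a" unfolding F_def a_def using rk_cl[OF M AsE] .
  have FE: "F \<subseteq> carrier M" unfolding F_def cl_def by blast
  have "cocircuit M Cs"
    unfolding Cs_def F_def using cocircuit_compl_cl[OF M AsE] ranks(2) unfolding a_def R_def by simp
  moreover have "x \<in> Cs" using ranks(1) xp unfolding Cs_def F_def cl_def a_def by simp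
  moreover have "p \<notin> Cs" using subset_cl[OF AsE] unfolding Cs_def F_def by blast
  moreover have "3 \<le> rk M Cs"
    unfolding Cs_def using rk_compl_hyperplane_three_connected[OF M \<open>three_connected M\<close> FE] rF ranks(2,3) \<open>x \<in> Cs\<close>
    unfolding R_def Cs_def by auto
  moreover have "rk M (insert p Cs) \<le> b"
  proof -
    have "Cs \<subseteq> Bs" using cover subset_cl[OF AsE] unfolding Cs_def F_def by blast
    then show ?thesis unfolding b_def by (intro rk_mono[OF M]) blast
  qed
  moreover have "rk M Cs \<le> rk M (insert p Cs)" by (rule rk_insert_ge[OF M])
  ultimately have "rk M Cs = 3" "rk M (insert p Cs) = rk M Cs" "4 \<le> R" "p \<in> cl M Cs - Cs"
    using ranks(2,4,5) xp(2) unfolding cl_def by auto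
  then show ?thesis using \<open>cocircuit M Cs\<close> \<open>x \<in> Cs\<close> by blast
qed

lemma lift_separation:
  fixes M :: "'a matroid" and C G A :: "'a set" and \<phi> :: "'a \<Rightarrow> 'a" and k :: nat
  defines "As \<equiv> {e \<in> carrier M - C. \<phi> e \<in> A}" and "Bs \<equiv> {e \<in> carrier M - C. \<phi> e \<notin> A}"
  assumes M: "matroid M" and "C \<subseteq> carrier M" and G: "point_transversal M C G"
    and \<phi>: "\<forall>e\<in>carrier M - C. \<phi> e \<in> G \<and> same_point M C e (\<phi> e)"
    and "k < 3" and sep: "k_separation (contract_restrict M C G) k A"
  shows "rk M C + k \<le> rk M (As \<union> C) \<and> rk M C + k \<le> rk M (Bs \<union> C)
    \<and> rk M (As \<union> C) + rk M (Bs \<union> C) < rk M (carrier M) + rk M C + k"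
proof -
  have AG: "A \<subseteq> G" and card: "k \<le> card A" "k \<le> card (G - A)"
    using sep unfolding k_separation_def by auto
  have GE: "G \<subseteq> carrier M - C" using G unfolding point_transversal_def by blast
  have fix_G: "\<phi> g = g" if "g \<in> G" for g
    using point_transversal_eq_if_same_point[OF G that] \<phi> GE that by (metis subsetD)
  have "\<phi> ` As = A" "\<phi> ` Bs = G - A"
    using AG GE fix_G \<phi> unfolding As_def Bs_def by (auto simp: image_iff, force+)
  moreover have "rk M (\<phi> ` Z \<union> C) = rk M (Z \<union> C)" if "Z \<subseteq> carrier M - C" for Z
    using rk_image_same_point[OF M] \<phi> that by (meson subsetD)
  ultimately have rAs: "rk M (As \<union> C) = rk M (A \<union> C)" and rBs: "rk M (Bs \<union> C) = rk M (G - A \<union> C)"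
    unfolding As_def Bs_def by (metis (no_types, lifting) mem_Collect_eq subsetI)+
  have "conn_fun (contract_restrict M C G) A < int k" using sep unfolding k_separation_def by blast
  moreover have "conn_fun (contract_restrict M C G) A
      = int (rk M (A \<union> C)) + int (rk M (G - A \<union> C)) - int (rk M (carrier M)) - int (rk M C)"
    using conn_fun_contract_restrict[OF M _ AG, of C] GE rk_point_transversal_spans[OF M G \<open>C \<subseteq> carrier M\<close>]
    by (metis Diff_subset order_trans)
  moreover have "rk M C + min 2 (card A) \<le> rk M (A \<union> C)" "rk M C + min 2 (card (G - A)) \<le> rk M (G - A \<union> C)"
    using rk_point_transversal_ge[OF M G] AG by auto
  ultimately show ?thesis unfolding rAs rBs using card \<open>k < 3\<close> by linarith
qed

lemma rank3_cocircuit_of_si_separation: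
  assumes M: "matroid M" and "three_connected M" and "simple M"
    and xp: "x \<in> carrier M" "p \<in> carrier M" "x \<noteq> p"
    and G: "point_transversal M {p} G" and \<phi>: "\<forall>e\<in>carrier M - {p}. \<phi> e \<in> G \<and> same_point M {p} e (\<phi> e)"
    and H: "point_transversal M {x, p} H" and T: "three_connected (contract_restrict M {x, p} H)"
    and "k < 3" and sep: "k_separation (contract_restrict M {p} G) k A" and "\<phi> x \<notin> A"
  shows "4 \<le> rk M (carrier M) \<and> (\<exists>Cs. cocircuit M Cs \<and> rk M Cs = 3 \<and> p \<in> cl M Cs - Cs \<and> x \<in> Cs)"
proof -
  define As where "As = {e \<in> carrier M - {p}. \<phi> e \<in> A}"
  define Bs where "Bs = {e \<in> carrier M - {p}. \<phi> e \<notin> A}"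
  have "{p} \<subseteq> carrier M" using xp(2) by simp
  from lift_separation[OF M this G \<phi> \<open>k < 3\<close> sep]
  have "k + 1 \<le> rk M (As \<union> {p})" "k + 1 \<le> rk M (Bs \<union> {p})"
    "rk M (As \<union> {p}) + rk M (Bs \<union> {p}) < rk M (carrier M) + 1 + k"
    using rk_singleton_simple[OF M \<open>simple M\<close> xp(2)] unfolding As_def Bs_def by linarith+
  moreover have "carrier M \<subseteq> insert p (As \<union> Bs)" "As \<subseteq> carrier M" "Bs \<subseteq> carrier M" "x \<in> Bs"
    unfolding As_def Bs_def using xp \<open>\<phi> x \<notin> A\<close> by auto
  ultimately show ?thesis
    using rank3_cocircuit_of_separation[OF M assms(2,3) xp H T] \<open>k < 3\<close> by blast
qed

theorem lemma5p1:
  fixes M :: "'a matroid" and N :: "'b matroid" and x p :: 'a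
  assumes "matroid M" and "three_connected M" and "simple M"
    and "matroid N" and "three_connected N" and "simple N"
    and "has_minor M N"
    and "x \<in> carrier M" and "p \<in> carrier M"
    and "vert_contractible M N {x, p}"
    and "\<not> vert_contractible M N {p}"
  shows "rk M (carrier M) \<ge> 4 \<and> (\<exists>Cs. vertbarrier M N Cs p \<and> x \<in> Cs)"
proof -
  note M = \<open>matroid M\<close>
  have "x \<noteq> p" using assms(10,11) by auto
  obtain G where G: "si (contract M {p}) = contract_restrict M {p} G" "point_transversal M {p} G"
    using si_contract_eq[OF M] .
  obtain H where H: "si (contract M {x, p}) = contract_restrict M {x, p} H" "point_transversal M {x, p} H"
    using si_contract_eq[OF M] .
  have T: "three_connected (contract_restrict M {x, p} H)" "has_minor (contract_restrict M {x, p} H) N"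
    using assms(10) H(1) unfolding vert_contractible_def by auto
  have nonloop: "rk M (insert e {p}) = Suc (rk M {p})" if "e \<in> carrier M - {p}" for e
    using rk_pair_simple[OF M \<open>simple M\<close>, of e p] rk_singleton_simple[OF M \<open>simple M\<close>] that assms(9) by auto
  obtain \<phi> where \<phi>: "\<forall>e\<in>carrier M - {p}. \<phi> e \<in> G \<and> same_point M {p} e (\<phi> e)"
    using G(2) nonloop unfolding point_transversal_def by metis
  have "G \<subseteq> carrier M" "rk M {x, p} = Suc (rk M {p})"
    using G(2) nonloop[of x] \<open>x \<noteq> p\<close> assms(8) unfolding point_transversal_def by auto
  then have "has_minor (contract_restrict M {p} G) N"
    using has_minor_contract_restrict_insert[OF M _ H(2) assms(8) _ \<phi> T(2)] by simp
  then obtain k A where "k < 3" "k_separation (contract_restrict M {p} G) k A" "\<phi> x \<notin> A"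
    using assms(11) G(1) k_separation_compl unfolding vert_contractible_def three_connected_def
    by (metis Diff_iff carrier_contract_restrict)
  then have "4 \<le> rk M (carrier M) \<and> (\<exists>Cs. cocircuit M Cs \<and> rk M Cs = 3 \<and> p \<in> cl M Cs - Cs \<and> x \<in> Cs)"
    using rank3_cocircuit_of_si_separation[OF M assms(2,3,8,9) \<open>x \<noteq> p\<close> G(2) \<phi> H(2) T(1)] by blast
  then show ?thesis using assms(10) unfolding vertbarrier_def vert_contractible_def by blast
qed

end
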